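(* Let $n\ge 6$, $4\le p\le n-1$, and let $K_{n+1}=(V,E)$ be the complete graph on $V=\{0,\dots,n\}$. If $c\in\mathbb{R}^E$ and $c_0\in\mathbb{R}$ are such that $c^\top y=c_0$ for the incidence vector $y$ of every $[0,n]$-$p$-path, then there are $\alpha,\beta,\gamma\in\mathbb{R}$ with $c_{0i}=\alpha$ and $c_{in}=\beta$ for all $i\in\{1,\dots,n-1\}$, and $c_{ij}=\gamma$ for all distinct $i,j\in\{1,\dots,n-1\}$.
   Context: For an undirected graph $G=(V,E)$ with $V=\{0,\dots,n\}$, a $[0,n]$-$p$-path is a simple (undirected) path from $0$ to $n$ with exactly $p$ edges. $c_{ij}$ denotes the entry of $c$ for the edge $[i,j]$. *)

theory Defs
  imports Complex_Main
begin

definition Kedges :: "nat \<Rightarrow> nat set set" where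
  "Kedges n = {{i, j} | i j. i \<le> n \<and> j \<le> n \<and> i \<noteq> j}"

definition is_0n_p_path :: "nat \<Rightarrow> nat \<Rightarrow> nat list \<Rightarrow> bool" where
  "is_0n_p_path n p vs \<longleftrightarrow> distinct vs \<and> length vs = p + 1 \<and> hd vs = 0 \<and> last vs = n
     \<and> set vs \<subseteq> {0..n}"

definition path_edges :: "nat list \<Rightarrow> nat set set" where
  "path_edges vs = {{vs ! k, vs ! (k + 1)} | k. k + 1 < length vs}"

definition incidence :: "nat list \<Rightarrow> nat set \<Rightarrow> real" where
  "incidence vs e = (if e \<in> path_edges vs then 1 else 0)"

end

theory Submission
  imports Defs
begin

text \<open>
  Two [0,n]-p-paths that differ only in a short initial (or final) stretch have the same cost,
  so the costs of those stretches agree. For distinct inner vertices a, b, s, exchanging a and b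
  in 0-a-b-s gives c(0a) + c(bs) = c(0b) + c(as), and replacing a by b in 0-a-s gives
  c(0a) + c(as) = c(0b) + c(bs). Adding and subtracting these yields c(0a) = c(0b) and
  c(as) = c(bs), so all inner edges cost the same; replacing a by b in s-a-n then gives
  c(an) = c(bn). Every stretch used can be completed to a p-path because p \<le> n - 1 leaves
  enough unused inner vertices; the same bounds give three inner vertices.
\<close>

fun walk_cost :: "(nat set \<Rightarrow> real) \<Rightarrow> nat list \<Rightarrow> real" where
  "walk_cost c (x # y # xs) = c {x, y} + walk_cost c (y # xs)"
| "walk_cost c _ = 0"

lemma walk_cost_append:
  "walk_cost c (xs @ y # ys) = walk_cost c (xs @ [y]) + walk_cost c (y # ys)"
proof (induction xs)
  case (Cons x xs)
  then show ?case by (cases xs) auto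
qed simp

lemma path_edges_conv_image: "path_edges vs = (\<lambda>k. {vs ! k, vs ! Suc k}) ` {..<length vs - 1}"
  by (auto simp: path_edges_def)

lemma path_edges_Nil [simp]: "path_edges [] = {}"
  and path_edges_singleton [simp]: "path_edges [x] = {}"
  by (simp_all add: path_edges_conv_image)

lemma path_edges_Cons_Cons [simp]:
  "path_edges (x # y # xs) = insert {x, y} (path_edges (y # xs))"
  by (simp add: path_edges_conv_image lessThan_Suc_eq_insert_0 image_image)

lemma finite_path_edges [simp]: "finite (path_edges vs)"
  by (simp add: path_edges_conv_image)

lemma path_edges_subset_set: "e \<in> path_edges vs \<Longrightarrow> e \<subseteq> set vs"
  by (auto simp: path_edges_def)

lemma sum_path_edges: "distinct vs \<Longrightarrow> (\<Sum>e\<in>path_edges vs. c e) = walk_cost c vs"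
proof (induction c vs rule: walk_cost.induct)
  case (1 c x y xs)
  have "{x, y} \<notin> path_edges (y # xs)"
    using "1.prems" path_edges_subset_set[of "{x, y}" "y # xs"] by auto
  with 1 show ?case by simp
qed simp_all

lemma path_edges_subset_Kedges:
  assumes "distinct vs" "set vs \<subseteq> {0..n}"
  shows "path_edges vs \<subseteq> Kedges n"
proof
  fix e assume "e \<in> path_edges vs"
  then obtain k where k: "e = {vs ! k, vs ! Suc k}" "Suc k < length vs"
    by (auto simp: path_edges_def)
  have "vs ! k \<noteq> vs ! Suc k" using k(2) assms(1) nth_eq_iff_index_eq by fastforce
  moreover have "vs ! k \<le> n" "vs ! Suc k \<le> n"
    using k(2) assms(2) by (meson Suc_lessD atLeastAtMost_iff nth_mem subsetD)+
  ultimately show "e \<in> Kedges n"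
    unfolding Kedges_def k(1) by blast
qed

lemma finite_Kedges: "finite (Kedges n)"
  by (rule finite_subset[of _ "Pow {0..n}"]) (auto simp: Kedges_def)

lemma incidence_sum_eq_walk_cost:
  assumes "distinct vs" "set vs \<subseteq> {0..n}"
  shows "(\<Sum>e\<in>Kedges n. c e * incidence vs e) = walk_cost c vs"
proof -
  have "(\<Sum>e\<in>Kedges n. c e * incidence vs e) = (\<Sum>e\<in>Kedges n \<inter> path_edges vs. c e)"
    by (simp add: incidence_def sum.inter_restrict[OF finite_Kedges] if_distrib cong: if_cong)
  also have "Kedges n \<inter> path_edges vs = path_edges vs"
    using path_edges_subset_Kedges[OF assms] by blast
  finally show ?thesis using sum_path_edges[OF assms(1)] by simp
qed

lemma is_0n_p_pathI:
  assumes "0 < n" "distinct xs" "set xs \<subseteq> {1..n-1}" "length xs + 1 = p"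
  shows "is_0n_p_path n p (0 # xs @ [n])"
  using assms by (fastforce simp: is_0n_p_path_def)

lemma exists_distinct_list_avoiding:
  assumes "finite A" "finite B" "k + card A \<le> card B"
  obtains xs where "distinct xs" "length xs = k" "set xs \<subseteq> B - A"
proof -
  have "k \<le> card (B - A)"
    using assms(3) diff_card_le_card_Diff[OF assms(1), of B] by linarith
  then obtain T where T: "T \<subseteq> B - A" "card T = k"
    by (rule obtain_subset_with_card_n)
  have "finite T" using T(1) assms(2) finite_subset by blast
  then obtain xs where xs: "set xs = T" "distinct xs"
    using finite_distinct_list by blast
  show ?thesis
  proof (rule that[OF xs(2)])
    show "length xs = k" using distinct_card[OF xs(2)] xs(1) T(2) by simp
    show "set xs \<subseteq> B - A" using xs(1) T(1) by simp
  qed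
qed

locale constant_p_path_cost =
  fixes n p :: nat and c :: "nat set \<Rightarrow> real" and c0 :: real
  assumes p_ge_4: "4 \<le> p" and p_le: "p \<le> n - 1"
    and cost_constant: "\<And>vs. is_0n_p_path n p vs \<Longrightarrow> walk_cost c vs = c0"
begin

lemma n_pos: "0 < n"
  using p_ge_4 p_le by simp

lemma exists_inner_filler:
  assumes "A \<subseteq> {1..n-1}" "card A \<le> k + 1" "k < p"
  obtains F where "distinct F" "length F + k + 1 = p" "set F \<subseteq> {1..n-1} - A"
proof -
  have "finite A" using assms(1) finite_subset by blast
  moreover have "p - Suc k + card A \<le> card {1..n-1}" using assms(2,3) p_le by simp
  ultimately obtain F where F: "distinct F" "length F = p - Suc k" "set F \<subseteq> {1..n-1} - A"
    by (rule exists_distinct_list_avoiding[OF _ finite_atLeastAtMost])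
  show ?thesis by (rule that[OF F(1) _ F(3)]) (use F(2) assms(3) in simp)
qed

text \<open>
  The cardinality bound says that the two stretches together use at most one vertex more than
  each of them, which leaves room for a common completion to a p-path.
\<close>

lemma walk_cost_prefix_exchange:
  assumes "distinct (us @ [y])" "distinct (ws @ [y])" "length us = length ws" "length us + 2 \<le> p"
    and "insert y (set us \<union> set ws) \<subseteq> {1..n-1}" "card (insert y (set us \<union> set ws)) \<le> length us + 2"
  shows "walk_cost c (0 # us @ [y]) = walk_cost c (0 # ws @ [y])"
proof -
  obtain F where F: "distinct F" "length F + (length us + 1) + 1 = p"
      "set F \<subseteq> {1..n-1} - insert y (set us \<union> set ws)"
    by (rule exists_inner_filler[OF assms(5)]) (use assms(4,6) in auto)
  have "walk_cost c (0 # (xs @ y # F) @ [n]) = c0"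
    if "distinct (xs @ [y])" "set xs \<subseteq> set us \<union> set ws" "length xs = length us" for xs
  proof (rule cost_constant, rule is_0n_p_pathI[OF n_pos])
    show "distinct (xs @ y # F)" using that(1,2) F(1,3) by auto
    show "set (xs @ y # F) \<subseteq> {1..n-1}" using that(2) assms(5) F(3) by auto
    show "length (xs @ y # F) + 1 = p" using that(3) F(2) by simp
  qed
  from this[of us] this[of ws] show ?thesis
    using assms(1-3) walk_cost_append[of c "0 # us" y "F @ [n]"] walk_cost_append[of c "0 # ws" y "F @ [n]"]
    by simp
qed

lemma walk_cost_suffix_exchange:
  assumes "distinct (y # us)" "distinct (y # ws)" "length us = length ws" "length us + 2 \<le> p"
    and "insert y (set us \<union> set ws) \<subseteq> {1..n-1}" "card (insert y (set us \<union> set ws)) \<le> length us + 2"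
  shows "walk_cost c (y # us @ [n]) = walk_cost c (y # ws @ [n])"
proof -
  obtain F where F: "distinct F" "length F + (length us + 1) + 1 = p"
      "set F \<subseteq> {1..n-1} - insert y (set us \<union> set ws)"
    by (rule exists_inner_filler[OF assms(5)]) (use assms(4,6) in auto)
  have "walk_cost c (0 # (F @ y # xs) @ [n]) = c0"
    if "distinct (y # xs)" "set xs \<subseteq> set us \<union> set ws" "length xs = length us" for xs
  proof (rule cost_constant, rule is_0n_p_pathI[OF n_pos])
    show "distinct (F @ y # xs)" using that(1,2) F(1,3) by auto
    show "set (F @ y # xs) \<subseteq> {1..n-1}" using that(2) assms(5) F(3) by auto
    show "length (F @ y # xs) + 1 = p" using that(3) F(2) by simp
  qed
  from this[of us] this[of ws] show ?thesis
    using assms(1-3) walk_cost_append[of c "0 # F" y "us @ [n]"] walk_cost_append[of c "0 # F" y "ws @ [n]"]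
    by simp
qed

lemma start_edge_swap:
  assumes "{a, b, s} \<subseteq> {1..n-1}" "distinct [a, b, s]"
  shows "c {0, a} + c {b, s} = c {0, b} + c {a, s}"
proof -
  have "walk_cost c (0 # [a, b] @ [s]) = walk_cost c (0 # [b, a] @ [s])"
    by (rule walk_cost_prefix_exchange) (use assms p_ge_4 in \<open>auto simp: card_insert_if\<close>)
  then show ?thesis by (simp add: insert_commute)
qed

lemma start_edge_reroute:
  assumes "{a, b, x} \<subseteq> {1..n-1}" "distinct [a, b, x]"
  shows "c {0, a} + c {a, b} = c {0, x} + c {x, b}"
proof -
  have "walk_cost c (0 # [a] @ [b]) = walk_cost c (0 # [x] @ [b])"
    by (rule walk_cost_prefix_exchange) (use assms p_ge_4 in \<open>auto simp: card_insert_if\<close>)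
  then show ?thesis by simp
qed

lemma end_edge_reroute:
  assumes "{a, b, x} \<subseteq> {1..n-1}" "distinct [a, b, x]"
  shows "c {b, a} + c {a, n} = c {b, x} + c {x, n}"
proof -
  have "walk_cost c (b # [a] @ [n]) = walk_cost c (b # [x] @ [n])"
    by (rule walk_cost_suffix_exchange) (use assms p_ge_4 in \<open>auto simp: card_insert_if\<close>)
  then show ?thesis by simp
qed

lemma exists_third_inner: "\<exists>s\<in>{1..n-1}. s \<noteq> a \<and> s \<noteq> b"
proof -
  have "\<exists>s::nat. 1 \<le> s \<and> s \<le> 3 \<and> s \<noteq> a \<and> s \<noteq> b" by presburger
  then show ?thesis using p_ge_4 p_le by force
qed

lemma start_edge_eq:
  assumes "a \<in> {1..n-1}" "b \<in> {1..n-1}"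
  shows "c {0, a} = c {0, b}"
proof (cases "a = b")
  case False
  obtain s where "s \<in> {1..n-1}" "s \<noteq> a" "s \<noteq> b" using exists_third_inner by blast
  then show ?thesis
    using start_edge_swap[of a b s] start_edge_reroute[of a s b] assms False
    by (auto simp: insert_commute)
qed simp

lemma inner_edge_eq:
  assumes "{a, b, s} \<subseteq> {1..n-1}" "a \<noteq> s" "b \<noteq> s"
  shows "c {a, s} = c {b, s}"
proof (cases "a = b")
  case False
  then show ?thesis
    using start_edge_swap[of a b s] start_edge_eq[of a b] assms by auto
qed simp

lemma inner_edges_eq:
  assumes "{i, j, k, l} \<subseteq> {1..n-1}" "i \<noteq> j" "k \<noteq> l"
  shows "c {i, j} = c {k, l}"
proof (cases "k = j")
  case True
  then show ?thesis
    using inner_edge_eq[of i l j] assms by (cases "i = l") (auto simp: insert_commute)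
next
  case False
  then have "c {i, j} = c {k, j}" using inner_edge_eq[of i k j] assms by auto
  also have "\<dots> = c {k, l}" using inner_edge_eq[of j l k] False assms by (auto simp: insert_commute)
  finally show ?thesis .
qed

lemma end_edge_eq:
  assumes "a \<in> {1..n-1}" "b \<in> {1..n-1}"
  shows "c {a, n} = c {b, n}"
proof (cases "a = b")
  case False
  obtain s where "s \<in> {1..n-1}" "s \<noteq> a" "s \<noteq> b" using exists_third_inner by blast
  then show ?thesis
    using end_edge_reroute[of a s b] inner_edge_eq[of a b s] assms False
    by (auto simp: insert_commute)
qed simp

end

theorem lemmaU1:
  fixes n p :: nat and c :: "nat set \<Rightarrow> real" and c0 :: real
  assumes "n \<ge> 6" and "4 \<le> p" and "p \<le> n - 1"
    and "\<forall>vs. is_0n_p_path n p vs \<longrightarrow> (\<Sum>e\<in>Kedges n. c e * incidence vs e) = c0"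
  shows "\<exists>\<alpha> \<beta> \<gamma>. (\<forall>i\<in>{1..n-1}. c {0, i} = \<alpha> \<and> c {i, n} = \<beta>)
           \<and> (\<forall>i\<in>{1..n-1}. \<forall>j\<in>{1..n-1}. i \<noteq> j \<longrightarrow> c {i, j} = \<gamma>)"
proof -
  interpret constant_p_path_cost n p c c0
  proof
    fix vs assume path: "is_0n_p_path n p vs"
    then have "distinct vs" "set vs \<subseteq> {0..n}" by (simp_all add: is_0n_p_path_def)
    then have "walk_cost c vs = (\<Sum>e\<in>Kedges n. c e * incidence vs e)"
      by (rule incidence_sum_eq_walk_cost[symmetric])
    also have "\<dots> = c0" using assms(4) path by blast
    finally show "walk_cost c vs = c0" .
  qed (use assms(2,3) in simp_all)
  have one: "1 \<in> {1..n-1}" and two: "2 \<in> {1..n-1}" using assms(2,3) by simp_all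
  have "c {0, i} = c {0, 1}" "c {i, n} = c {1, n}" if "i \<in> {1..n-1}" for i
    using start_edge_eq[OF that one] end_edge_eq[OF that one] by simp_all
  moreover have "c {i, j} = c {1, 2}" if "i \<in> {1..n-1}" "j \<in> {1..n-1}" "i \<noteq> j" for i j
    using inner_edges_eq[of i j 1 2] that one two by simp
  ultimately show ?thesis by blast
qed

end
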